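(* Let $d_1$ be a positive integer, let $p_{10}<p_{11}<\cdots<p_{1d_1}$ and $p_{20}<p_{21}$ be real numbers (so $d_2=1$), and let $$S=\bigl\{(x_1,x_2,\mu)\in\mathbb{R}^2\times\mathbb{R} : \mu=x_1x_2,\ x_1\in\{p_{10},\dots,p_{1d_1}\},\ x_2\in\{p_{20},p_{21}\}\bigr\}.$$ Consider the set $E$ of all $(x_1,x_2,\mu,\boldsymbol{z}_1,z_{21})\in\mathbb{R}^2\times\mathbb{R}\times\{0,1\}^{d_1}\times\{0,1\}$ with $\boldsymbol{z}_1=(z_{11},\dots,z_{1d_1})$ satisfying $x_1=p_{10}+\sum_{j=1}^{d_1}(p_{1j}-p_{1,j-1})z_{1j}$, $1\ge z_{11}\ge z_{12}\ge\cdots\ge z_{1d_1}\ge 0$, $x_2=p_{20}+(p_{21}-p_{20})z_{21}$, $1\ge z_{21}\ge 0$, and the four inequalities \begin{align*} \mu&\le p_{10}p_{20}+p_{10}(p_{21}-p_{20})z_{21}+\textstyle\sum_{j=1}^{d_1}p_{21}(p_{1j}-p_{1,j-1})z_{1j},\\ \mu&\le p_{10}p_{20}+\textstyle\sum_{j=1}^{d_1}p_{20}(p_{1j}-p_{1,j-1})z_{1j}+p_{1d_1}(p_{21}-p_{20})z_{21},\\ \mu&\ge p_{10}p_{21}+p_{10}(p_{20}-p_{21})(1-z_{21})+\textstyle\sum_{j=1}^{d_1}p_{20}(p_{1j}-p_{1,j-1})z_{1j},\\ \mu&\ge p_{10}p_{21}+\textstyle\sum_{j=1}^{d_1}p_{21}(p_{1j}-p_{1,j-1})z_{1j}+p_{1d_1}(p_{20}-p_{21})(1-z_{21}).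 \end{align*} Then $E$ is an MIP formulation of $S$, i.e., the projection of $E$ onto the $(x_1,x_2,\mu)$ variables equals $S$.
   Context: An MIP formulation of a set $S\subseteq\mathbb{R}^k$ is a set of the form $E=\{(\boldsymbol{x},\boldsymbol{y},\boldsymbol{z})\in Q:\boldsymbol{z}\in\{0,1\}^q\}$, with $Q$ a polyhedron, whose projection onto the $\boldsymbol{x}$-variables equals $S$. *)

theory Defs
  imports Complex_Main
begin

text \<open>Points are tuples (x1, x2, mu, z1, z21); z1 is the vector (z1 1, ..., z1 d1),
  represented as a function nat => real (values outside 1..d1 are irrelevant).
  p1 j is p_{1j} for j = 0..d1.\<close>

definition S_set :: "nat \<Rightarrow> (nat \<Rightarrow> real) \<Rightarrow> real \<Rightarrow> real \<Rightarrow> (real \<times> real \<times> real) set" where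
  "S_set d1 p1 p20 p21 =
     {(x1, x2, mu). mu = x1 * x2 \<and> x1 \<in> p1 ` {0..d1} \<and> x2 \<in> {p20, p21}}"

definition Q_set :: "nat \<Rightarrow> (nat \<Rightarrow> real) \<Rightarrow> real \<Rightarrow> real
    \<Rightarrow> (real \<times> real \<times> real \<times> (nat \<Rightarrow> real) \<times> real) set" where
  "Q_set d1 p1 p20 p21 =
     {(x1, x2, mu, z1, z21).
        x1 = p1 0 + (\<Sum>j=1..d1. (p1 j - p1 (j - 1)) * z1 j)
      \<and> z1 1 \<le> 1 \<and> (\<forall>j\<in>{1..<d1}. z1 (j + 1) \<le> z1 j) \<and> z1 d1 \<ge> 0
      \<and> x2 = p20 + (p21 - p20) * z21
      \<and> z21 \<le> 1 \<and> z21 \<ge> 0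
      \<and> mu \<le> p1 0 * p20 + p1 0 * (p21 - p20) * z21
              + (\<Sum>j=1..d1. p21 * (p1 j - p1 (j - 1)) * z1 j)
      \<and> mu \<le> p1 0 * p20 + (\<Sum>j=1..d1. p20 * (p1 j - p1 (j - 1)) * z1 j)
              + p1 d1 * (p21 - p20) * z21
      \<and> mu \<ge> p1 0 * p21 + p1 0 * (p20 - p21) * (1 - z21)
              + (\<Sum>j=1..d1. p20 * (p1 j - p1 (j - 1)) * z1 j)
      \<and> mu \<ge> p1 0 * p21 + (\<Sum>j=1..d1. p21 * (p1 j - p1 (j - 1)) * z1 j)
              + p1 d1 * (p20 - p21) * (1 - z21)}"

definition E_set :: "nat \<Rightarrow> (nat \<Rightarrow> real) \<Rightarrow> real \<Rightarrow> real
    \<Rightarrow> (real \<times> real \<times> real \<times> (nat \<Rightarrow> real) \<times> real) set" where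
  "E_set d1 p1 p20 p21 =
     {(x1, x2, mu, z1, z21) \<in> Q_set d1 p1 p20 p21.
        (\<forall>j\<in>{1..d1}. z1 j \<in> {0, 1}) \<and> z21 \<in> {0, 1}}"

definition proj_x :: "(real \<times> real \<times> real \<times> (nat \<Rightarrow> real) \<times> real) \<Rightarrow> real \<times> real \<times> real" where
  "proj_x v = (case v of (x1, x2, mu, z1, z21) \<Rightarrow> (x1, x2, mu))"

end

theory Submission
  imports Defs
begin

text \<open>For binary z the monotonicity constraints force z1 to be a staircase vector
  (1 on 1..k, 0 on k+1..d1), which makes the sums in Q telescope to x1 = p_{1k}.
  After this substitution the four inequalities on mu are exactly the McCormick
  envelope of x1 * x2 over the box [p_{10}, p_{1d1}] x [p20, p21], and that envelope
  is exact whenever x2 sits at an end of its interval, as it does for binary z21.\<close>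

definition staircase :: "nat \<Rightarrow> nat \<Rightarrow> real" where
  "staircase k j = (if j \<le> k then 1 else 0)"

definition mccormick :: "real \<Rightarrow> real \<Rightarrow> real \<Rightarrow> real \<Rightarrow> real \<Rightarrow> real \<Rightarrow> real \<Rightarrow> bool" where
  "mccormick xl xu yl yu x y w \<longleftrightarrow>
     w \<le> xl * y + yu * x - xl * yu \<and> w \<le> yl * x + xu * y - xu * yl \<and>
     w \<ge> xl * y + yl * x - xl * yl \<and> w \<ge> yu * x + xu * y - xu * yu"

lemma mccormick_product:
  assumes "xl \<le> x" "x \<le> xu" "yl \<le> y" "y \<le> yu"
  shows "mccormick xl xu yl yu x y (x * y)"
proof -
  have "(x - xl) * (yu - y) \<ge> 0" "(xu - x) * (y - yl) \<ge> 0"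
       "(x - xl) * (y - yl) \<ge> 0" "(xu - x) * (yu - y) \<ge> 0"
    using assms by simp_all
  then show ?thesis
    unfolding mccormick_def by (simp add: algebra_simps)
qed

lemma mccormick_imp_product:
  assumes "mccormick xl xu yl yu x y w" "y \<in> {yl, yu}"
  shows "w = x * y"
  using assms unfolding mccormick_def by (auto simp: algebra_simps)

lemma binary_antimono_is_staircase:
  fixes z :: "nat \<Rightarrow> real"
  assumes antimono: "\<forall>j\<in>{1..<d}. z (j + 1) \<le> z j"
    and binary: "\<forall>j\<in>{1..d}. z j \<in> {0, 1}"
  obtains k where "k \<le> d" "\<forall>j\<in>{1..d}. z j = staircase k j"
proof
  define K where "K = insert 0 {j\<in>{1..d}. z j = 1}"
  define k where "k = Max K"
  have "finite K"
    unfolding K_def by simp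
  have "k \<in> K"
    unfolding k_def by (rule Max_in[OF \<open>finite K\<close>]) (simp add: K_def)
  have le_k: "j \<le> k" if "j \<in> K" for j
    unfolding k_def by (rule Max_ge[OF \<open>finite K\<close> that])
  from \<open>k \<in> K\<close> show "k \<le> d"
    unfolding K_def by auto
  show "\<forall>j\<in>{1..d}. z j = staircase k j"
  proof
    fix j assume j: "j \<in> {1..d}"
    show "z j = staircase k j"
    proof (cases "j \<le> k")
      case True
      then have "z k = 1"
        using j \<open>k \<in> K\<close> unfolding K_def by auto
      moreover have "z k \<le> z j"
        by (rule lift_Suc_antimono_le_ivl[where N = "{1..<d}"])
          (use \<open>k \<le> d\<close> True j antimono in auto)
      moreover have "z j \<in> {0, 1}"
        using j binary by blast
      ultimately show ?thesis
        using True unfolding staircase_def by auto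
    next
      case False
      then have "j \<notin> K"
        using le_k by blast
      then show ?thesis
        using False j binary unfolding K_def staircase_def by auto
    qed
  qed
qed

lemma sum_increments_staircase:
  fixes p :: "nat \<Rightarrow> real"
  assumes "k \<le> d" "\<forall>j\<in>{1..d}. z j = staircase k j"
  shows "(\<Sum>j=1..d. c * (p j - p (j - 1)) * z j) = c * (p k - p 0)"
proof -
  have "(\<Sum>j=1..d. c * (p j - p (j - 1)) * z j)
      = (\<Sum>j\<in>{j\<in>{1..d}. j \<le> k}. c * (p j - p (j - 1)))"
    using assms(2) unfolding staircase_def by (subst sum.inter_filter) (auto intro: sum.cong)
  also have "{j\<in>{1..d}. j \<le> k} = {1..k}"
    using assms(1) by auto
  also have "(\<Sum>j=1..k. c * (p j - p (j - 1))) = c * (p k - p 0)"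
    by (induction k) (simp_all add: algebra_simps)
  finally show ?thesis .
qed

lemma mccormick_affine_iff:
  assumes "y = yl + (yu - yl) * z"
  shows "mccormick xl xu yl yu x y w \<longleftrightarrow>
           w \<le> xl * yl + xl * (yu - yl) * z + yu * (x - xl) \<and>
           w \<le> xl * yl + yl * (x - xl) + xu * (yu - yl) * z \<and>
           w \<ge> xl * yu + xl * (yl - yu) * (1 - z) + yl * (x - xl) \<and>
           w \<ge> xl * yu + yu * (x - xl) + xu * (yl - yu) * (1 - z)"
  unfolding mccormick_def assms by (simp add: algebra_simps)

lemma Q_set_staircase_iff:
  assumes "1 \<le> d1" "k \<le> d1" and z1: "\<forall>j\<in>{1..d1}. z1 j = staircase k j"
  shows "(x1, x2, mu, z1, z21) \<in> Q_set d1 p1 p20 p21 \<longleftrightarrow>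
           x1 = p1 k \<and> x2 = p20 + (p21 - p20) * z21 \<and> 0 \<le> z21 \<and> z21 \<le> 1 \<and>
           mccormick (p1 0) (p1 d1) p20 p21 x1 x2 mu"
proof -
  have "z1 1 \<le> 1" "z1 d1 \<ge> 0" "\<forall>j\<in>{1..<d1}. z1 (j + 1) \<le> z1 j"
    using assms unfolding staircase_def by auto
  moreover have sums: "(\<Sum>j=1..d1. c * (p1 j - p1 (j - 1)) * z1 j) = c * (p1 k - p1 0)" for c
    by (rule sum_increments_staircase[OF assms(2) z1])
  moreover have x1_sum: "(\<Sum>j=1..d1. (p1 j - p1 (j - 1)) * z1 j) = p1 k - p1 0"
    using sums[of 1] by simp
  ultimately show ?thesis
    unfolding Q_set_def mem_Collect_eq case_prod_conv
    by (simp only: sums x1_sum) (auto simp: mccormick_affine_iff[OF refl])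
qed

theorem proposition1:
  fixes d1 :: nat and p1 :: "nat \<Rightarrow> real" and p20 p21 :: real
  assumes "d1 \<ge> 1"
    and "\<And>j. j < d1 \<Longrightarrow> p1 j < p1 (j + 1)"
    and "p20 < p21"
  shows "proj_x ` E_set d1 p1 p20 p21 = S_set d1 p1 p20 p21"
proof
  show "proj_x ` E_set d1 p1 p20 p21 \<subseteq> S_set d1 p1 p20 p21"
  proof
    fix v assume "v \<in> proj_x ` E_set d1 p1 p20 p21"
    then obtain x1 x2 mu z1 z21 where v: "v = (x1, x2, mu)"
      and Q: "(x1, x2, mu, z1, z21) \<in> Q_set d1 p1 p20 p21"
      and z1: "\<forall>j\<in>{1..d1}. z1 j \<in> {0, 1}" and z21: "z21 \<in> {0, 1}"
      unfolding proj_x_def E_set_def by auto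
    then obtain k where k: "k \<le> d1" and staircase: "\<forall>j\<in>{1..d1}. z1 j = staircase k j"
      using binary_antimono_is_staircase unfolding Q_set_def by blast
    then have "x1 = p1 k" "x2 \<in> {p20, p21}" "mccormick (p1 0) (p1 d1) p20 p21 x1 x2 mu"
      using Q Q_set_staircase_iff[OF assms(1) k staircase] z21 by auto
    then show "v \<in> S_set d1 p1 p20 p21"
      using v k mccormick_imp_product unfolding S_set_def by auto
  qed
next
  show "S_set d1 p1 p20 p21 \<subseteq> proj_x ` E_set d1 p1 p20 p21"
  proof
    fix v assume "v \<in> S_set d1 p1 p20 p21"
    then obtain k x2 where v: "v = (p1 k, x2, p1 k * x2)" and k: "k \<le> d1"
      and x2: "x2 \<in> {p20, p21}"
      unfolding S_set_def by force
    define z21 where "z21 = (if x2 = p20 then 0 else 1 :: real)"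
    have "p1 0 \<le> p1 k" "p1 k \<le> p1 d1"
      by (rule lift_Suc_mono_le_ivl[where N = "{..<d1}"], use k assms(2) less_imp_le in auto)+
    then have "(p1 k, x2, p1 k * x2, staircase k, z21) \<in> E_set d1 p1 p20 p21"
      using Q_set_staircase_iff[OF assms(1) k] x2 assms(3)
      by (auto simp: E_set_def z21_def staircase_def intro!: mccormick_product)
    then show "v \<in> proj_x ` E_set d1 p1 p20 p21"
      unfolding v proj_x_def by force
  qed
qed

end
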